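(* Let $H:\mathcal P N\times Ł_1^S\to Ł_1$ be a playable Boolean effectivity function and let $n\ge1$. Define $E:\mathcal P N\times Ł_n^S\to Ł_n$ by $E(C,f)=\max\{\tfrac in\in Ł_n\mid H(C,\tau_{i/n}(f))=1\}$ (with $\tau_{0}(f)$ understood as the constant $1$, so the set is nonempty). Then $E$ is a playable $Ł_n$-valued effectivity function with $E^\sharp=H$. If moreover $H$ is truly playable, then $E$ is truly playable.
   Context: For a positive integer $n$ let $Ł_n=\{0,\frac1n,\dots,1\}$ with $\neg x=1-x$, $x\oplus y=\min(x+y,1)$, $x\odot y=\max(x+y-1,0)$, $\wedge=\min$, $\vee=\max$, applied pointwise on $Ł_n^S$; $0,1$ also denote constant functions; $Ł_1^S=\{0,1\}^S$. For $i\in\{1,\dots,n\}$, $\tau_{i/n}:Ł_n\to Ł_n$ is $\tau_{i/n}(x)=1$ if $x\ge i/n$ and $0$ otherwise, applied pointwise to functions. $E^\sharp$ is the restriction of $E$ to $\mathcal P N\times Ł_1^S$. Standing assumptions: $N$ finite, $|N|\ge2$, $|S|\ge2$; $\overline C=N\setminus C$. An $Ł_n$-valued effectivity function is any map $E:\mathcal P N\times Ł_n^S\to Ł_n$ (Boolean when $n=1$). It is: outcome monotonic if $f\ge g$ implies $E(C,f)\ge E(C,g)$; $N$-maximal if $\neg E(\varnothing,\neg f)\le E(N,f)$; superadditive if $E(C_1,f)\wedge E(C_2,g)\le E(C_1\cup C_2,f\wedge g)$ whenever $C_1\cap C_2=\varnothing$; homogeneous if $E(C,f\oplus f)=E(C,f)\oplus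 E(C,f)$ and $E(C,f\odot f)=E(C,f)\odot E(C,f)$; has liveness if $E(C,1)=1$ for all $C$; has safety if $E(C,0)=0$ for all $C$; principal if there is $g$ with $\{f\mid E(\varnothing,f)=1\}=\{f\mid f\ge g\odot\cdots\odot g\ (n\text{ factors})\}$. Playable: outcome monotonic, $N$-maximal, superadditive, homogeneous, liveness and safety; truly playable: playable and principal. *)

theory Defs
  imports Main "HOL.Real"
begin

definition luk :: "nat \<Rightarrow> real set" where
  "luk n = {real i / real n | i. i \<le> n}"

definition lfun :: "nat \<Rightarrow> ('s \<Rightarrow> real) set" where
  "lfun n = {f. \<forall>s. f s \<in> luk n}"

definition loplus :: "real \<Rightarrow> real \<Rightarrow> real" where
  "loplus x y = min (x + y) 1"

definition lodot :: "real \<Rightarrow> real \<Rightarrow> real" where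
  "lodot x y = max (x + y - 1) 0"

fun lodot_pow :: "real \<Rightarrow> nat \<Rightarrow> real" where
  "lodot_pow x 0 = 1"
| "lodot_pow x (Suc k) = lodot x (lodot_pow x k)"

definition tau :: "real \<Rightarrow> ('s \<Rightarrow> real) \<Rightarrow> ('s \<Rightarrow> real)" where
  "tau t f = (\<lambda>s. if f s \<ge> t then 1 else 0)"

text \<open>An L_n-valued effectivity function: maps P N x L_n^S into L_n
  (only its values on L_n^S matter).\<close>
definition is_EF :: "nat \<Rightarrow> ('p set \<Rightarrow> ('s \<Rightarrow> real) \<Rightarrow> real) \<Rightarrow> bool" where
  "is_EF n E = (\<forall>C. \<forall>f\<in>lfun n. E C f \<in> luk n)"

definition outcome_monotonic :: "nat \<Rightarrow> ('p set \<Rightarrow> ('s \<Rightarrow> real) \<Rightarrow> real) \<Rightarrow> bool" where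
  "outcome_monotonic n E = (\<forall>C. \<forall>f\<in>lfun n. \<forall>g\<in>lfun n.
      (\<forall>s. g s \<le> f s) \<longrightarrow> E C g \<le> E C f)"

definition N_maximal :: "nat \<Rightarrow> ('p set \<Rightarrow> ('s \<Rightarrow> real) \<Rightarrow> real) \<Rightarrow> bool" where
  "N_maximal n E = (\<forall>f\<in>lfun n. 1 - E {} (\<lambda>s. 1 - f s) \<le> E UNIV f)"

definition superadditive :: "nat \<Rightarrow> ('p set \<Rightarrow> ('s \<Rightarrow> real) \<Rightarrow> real) \<Rightarrow> bool" where
  "superadditive n E = (\<forall>C1 C2. \<forall>f\<in>lfun n. \<forall>g\<in>lfun n. C1 \<inter> C2 = {} \<longrightarrow>
      min (E C1 f) (E C2 g) \<le> E (C1 \<union> C2) (\<lambda>s. min (f s) (g s)))"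

definition homogeneous :: "nat \<Rightarrow> ('p set \<Rightarrow> ('s \<Rightarrow> real) \<Rightarrow> real) \<Rightarrow> bool" where
  "homogeneous n E = (\<forall>C. \<forall>f\<in>lfun n.
      E C (\<lambda>s. loplus (f s) (f s)) = loplus (E C f) (E C f) \<and>
      E C (\<lambda>s. lodot (f s) (f s)) = lodot (E C f) (E C f))"

definition liveness :: "('p set \<Rightarrow> ('s \<Rightarrow> real) \<Rightarrow> real) \<Rightarrow> bool" where
  "liveness E = (\<forall>C. E C (\<lambda>_. 1) = 1)"

definition safety :: "('p set \<Rightarrow> ('s \<Rightarrow> real) \<Rightarrow> real) \<Rightarrow> bool" where
  "safety E = (\<forall>C. E C (\<lambda>_. 0) = 0)"

definition principal :: "nat \<Rightarrow> ('p set \<Rightarrow> ('s \<Rightarrow> real) \<Rightarrow> real) \<Rightarrow> bool" where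
  "principal n E = (\<exists>g\<in>lfun n.
      {f \<in> lfun n. E {} f = 1} = {f \<in> lfun n. \<forall>s. lodot_pow (g s) n \<le> f s})"

definition playable :: "nat \<Rightarrow> ('p set \<Rightarrow> ('s \<Rightarrow> real) \<Rightarrow> real) \<Rightarrow> bool" where
  "playable n E = (is_EF n E \<and> outcome_monotonic n E \<and> N_maximal n E \<and>
      superadditive n E \<and> homogeneous n E \<and> liveness E \<and> safety E)"

definition truly_playable :: "nat \<Rightarrow> ('p set \<Rightarrow> ('s \<Rightarrow> real) \<Rightarrow> real) \<Rightarrow> bool" where
  "truly_playable n E = (playable n E \<and> principal n E)"

end

theory Submission
  imports Defs
begin

text \<open>Write \<open>E(C,f) = k/n\<close>. Since \<open>H\<close> is outcome monotonic and the cuts \<open>\<tau>\<^sub>t f\<close> decrease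
  as the threshold \<open>t\<close> grows, \<open>H(C, \<tau>\<^sub>i\<^sub>/\<^sub>n f) = 1\<close> holds exactly for \<open>i \<le> k\<close>. Every axiom for \<open>E\<close>
  therefore reduces to the corresponding axiom for \<open>H\<close> applied to cuts: cuts commute with
  \<open>\<and>\<close>, the cuts of \<open>f \<oplus> f\<close> and \<open>f \<odot> f\<close> are cuts of \<open>f\<close> at reindexed thresholds, and the
  complement of a cut of \<open>f\<close> is a cut of \<open>\<not>f\<close>. On Boolean \<open>f\<close> every nontrivial cut is \<open>f\<close>
  itself, which gives \<open>E\<^sup>\<sharp> = H\<close>; a generator \<open>g\<close> of \<open>H(\<emptyset>,\<cdot>)\<close> generates \<open>E(\<emptyset>,\<cdot>)\<close> because
  \<open>g \<odot> \<dots> \<odot> g = g\<close> for Boolean \<open>g\<close>.\<close>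

lemma grid_in_luk: "j \<le> n \<Longrightarrow> real j / real n \<in> luk n"
  unfolding luk_def by blast

lemma luk_Suc_0: "luk (Suc 0) = {0, 1}"
proof
  show "luk (Suc 0) \<subseteq> {0, 1}" unfolding luk_def by (auto simp: le_Suc_eq)
  have "real 0 / real (Suc 0) \<in> luk (Suc 0)" "real 1 / real (Suc 0) \<in> luk (Suc 0)"
    by (rule grid_in_luk, simp)+
  then show "{0, 1} \<subseteq> luk (Suc 0)" by simp
qed

lemma lfun_Suc_0_iff: "g \<in> lfun (Suc 0) \<longleftrightarrow> (\<forall>s. g s = 0 \<or> g s = 1)"
  by (simp add: lfun_def luk_Suc_0)

lemma lfun_1_subset: "n \<ge> 1 \<Longrightarrow> lfun 1 \<subseteq> lfun n"
proof -
  assume "n \<ge> 1"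
  then have "0 \<in> luk n" "1 \<in> luk n" using grid_in_luk[of 0 n] grid_in_luk[of n n] by simp_all
  then have "{0, 1} \<subseteq> luk n" by simp
  then show ?thesis unfolding lfun_def One_nat_def luk_Suc_0 by (blast intro: subsetD)
qed

lemma lfun_gridE:
  assumes "f \<in> lfun n"
  obtains j where "j \<le> n" "f s = real j / real n"
  using assms unfolding lfun_def luk_def by blast

lemma lfun_nonneg: "f \<in> lfun n \<Longrightarrow> \<forall>s. 0 \<le> f s"
  by (metis lfun_gridE of_nat_0_le_iff divide_nonneg_nonneg)

lemma lfun_le_1: "f \<in> lfun n \<Longrightarrow> f s \<le> 1"
  by (erule lfun_gridE[where s = s]) (auto simp: divide_le_eq_1)

lemma tau_in_lfun_1: "tau t f \<in> lfun 1"
  by (simp add: lfun_Suc_0_iff tau_def)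

lemma tau_antimono_threshold: "t \<le> t' \<Longrightarrow> tau t' f s \<le> tau t f s"
  by (simp add: tau_def)

lemma tau_mono: "(\<And>s. g s \<le> f s) \<Longrightarrow> tau t g s \<le> tau t f s"
  by (auto simp: tau_def intro: order_trans)

lemma tau_min: "tau t (\<lambda>s. min (f s) (g s)) = (\<lambda>s. min (tau t f s) (tau t g s))"
  by (auto simp: tau_def)

lemma boolean_le_tau_1_iff: "x = 0 \<or> x = 1 \<Longrightarrow> 0 \<le> f s \<Longrightarrow> x \<le> tau 1 f s \<longleftrightarrow> x \<le> f s"
  by (auto simp: tau_def)

lemma lodot_pow_boolean: "x = 0 \<or> x = 1 \<Longrightarrow> k \<ge> 1 \<Longrightarrow> lodot_pow x k = x"
proof (induction k)
  case (Suc k)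
  then show ?case by (cases "k = 0") (auto simp: lodot_def)
qed simp

lemma le_min_double_iff: "i \<le> n \<Longrightarrow> i \<le> min (2 * j) n \<longleftrightarrow> (i + 1) div 2 \<le> (j::nat)"
  by presburger

lemma le_double_minus_iff:
  "i \<le> 2 * j - n \<longleftrightarrow> (if i = 0 then 0 else (n + i + 1) div 2) \<le> (j::nat)"
  by presburger

lemma le_antisym_by_lower_sets:
  "(\<And>i. i \<le> n \<Longrightarrow> i \<le> a \<longleftrightarrow> i \<le> b) \<Longrightarrow> a \<le> n \<Longrightarrow> b \<le> (n::nat) \<Longrightarrow> a = b"
  by (meson le_antisym order_refl)


locale threshold_extension =
  fixes H :: "'p set \<Rightarrow> ('s \<Rightarrow> real) \<Rightarrow> real" and n :: nat
  assumes n_pos: "n \<ge> 1" and H_playable: "playable 1 H"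
begin

definition lift :: "'p set \<Rightarrow> ('s \<Rightarrow> real) \<Rightarrow> real" where
  "lift C f = Max {real i / real n | i. i \<le> n \<and> H C (tau (real i / real n) f) = 1}"

definition forced_levels :: "'p set \<Rightarrow> ('s \<Rightarrow> real) \<Rightarrow> nat set" where
  "forced_levels C f = {i. i \<le> n \<and> H C (tau (real i / real n) f) = 1}"

definition level :: "'p set \<Rightarrow> ('s \<Rightarrow> real) \<Rightarrow> nat" where
  "level C f = Max (forced_levels C f)"

lemma H_boolean: "g \<in> lfun 1 \<Longrightarrow> H C g = 0 \<or> H C g = 1"
  using H_playable unfolding playable_def is_EF_def by (auto simp: luk_Suc_0)

lemma H_mono: "g \<in> lfun 1 \<Longrightarrow> h \<in> lfun 1 \<Longrightarrow> (\<And>s. g s \<le> h s) \<Longrightarrow> H C g \<le> H C h"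
  using H_playable unfolding playable_def outcome_monotonic_def by blast

lemma H_liveness: "H C (\<lambda>_. 1) = 1"
  using H_playable unfolding playable_def liveness_def by blast

lemma H_safety: "H C (\<lambda>_. 0) = 0"
  using H_playable unfolding playable_def safety_def by blast

lemma H_superadditive:
  "C1 \<inter> C2 = {} \<Longrightarrow> a \<in> lfun 1 \<Longrightarrow> b \<in> lfun 1 \<Longrightarrow>
    min (H C1 a) (H C2 b) \<le> H (C1 \<union> C2) (\<lambda>s. min (a s) (b s))"
  using H_playable unfolding playable_def superadditive_def by blast

lemma H_N_maximal:
  assumes g: "g \<in> lfun 1" and "H UNIV g = 0"
  shows "H {} (\<lambda>s. 1 - g s) = 1"
proof -
  have "1 - H {} (\<lambda>s. 1 - g s) \<le> H UNIV g"
    using H_playable g unfolding playable_def N_maximal_def by blast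
  moreover have "(\<lambda>s. 1 - g s) \<in> lfun 1" using g by (auto simp: lfun_Suc_0_iff)
  then have "H {} (\<lambda>s. 1 - g s) = 0 \<or> H {} (\<lambda>s. 1 - g s) = 1" by (rule H_boolean)
  ultimately show ?thesis using \<open>H UNIV g = 0\<close> by auto
qed

lemma H_cut_eq_1_iff_ge_1: "H C (tau t f) = 1 \<longleftrightarrow> H C (tau t f) \<ge> 1"
  using H_boolean[OF tau_in_lfun_1] by force

lemma n_neq_0 [simp]: "n \<noteq> 0"
  using n_pos by simp

lemma grid_le_iff: "real a / real n \<le> real b / real n \<longleftrightarrow> a \<le> b"
  using n_pos by (simp add: divide_le_cancel)

lemma tau_grid: "f s = real j / real n \<Longrightarrow> tau (real i / real n) f s = (if i \<le> j then 1 else 0)"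
  by (simp add: tau_def grid_le_iff)

lemma finite_forced_levels: "finite (forced_levels C f)"
  unfolding forced_levels_def by (rule finite_subset[of _ "{..n}"]) auto

lemma zero_in_forced_levels: "\<forall>s. 0 \<le> f s \<Longrightarrow> 0 \<in> forced_levels C f"
proof -
  assume "\<forall>s. 0 \<le> f s"
  then have "tau 0 f = (\<lambda>_. 1)" by (auto simp: tau_def)
  then show ?thesis using H_liveness by (simp add: forced_levels_def)
qed

lemma H_cut_at_level:
  "\<forall>s. 0 \<le> f s \<Longrightarrow> level C f \<le> n \<and> H C (tau (real (level C f) / real n) f) = 1"
  using Max_in[OF finite_forced_levels] zero_in_forced_levels
  unfolding level_def forced_levels_def by blast

lemma level_le: "\<forall>s. 0 \<le> f s \<Longrightarrow> level C f \<le> n"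
  using H_cut_at_level by blast

lemma H_cut_iff_le_level:
  assumes f: "\<forall>s. 0 \<le> f s" and i: "i \<le> n"
  shows "H C (tau (real i / real n) f) = 1 \<longleftrightarrow> i \<le> level C f"
proof
  assume "H C (tau (real i / real n) f) = 1"
  then have "i \<in> forced_levels C f" using i by (simp add: forced_levels_def)
  then show "i \<le> level C f" unfolding level_def using finite_forced_levels by simp
next
  assume "i \<le> level C f"
  then have "H C (tau (real (level C f) / real n) f) \<le> H C (tau (real i / real n) f)"
    by (intro H_mono tau_in_lfun_1 tau_antimono_threshold) (simp add: grid_le_iff)
  then show "H C (tau (real i / real n) f) = 1"
    using H_cut_at_level[OF f] H_cut_eq_1_iff_ge_1 by simp
qed

lemma lift_eq_level: "\<forall>s. 0 \<le> f s \<Longrightarrow> lift C f = real (level C f) / real n"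
proof -
  assume f: "\<forall>s. 0 \<le> f s"
  have mono: "mono (\<lambda>i. real i / real n)" by (simp add: mono_def grid_le_iff)
  have "lift C f = Max ((\<lambda>i. real i / real n) ` forced_levels C f)"
    unfolding lift_def forced_levels_def by (rule arg_cong[where f = Max]) blast
  also have "\<dots> = real (level C f) / real n"
  proof -
    have "forced_levels C f \<noteq> {}" using zero_in_forced_levels[OF f] by blast
    from mono_Max_commute[OF mono finite_forced_levels this] show ?thesis
      unfolding level_def by simp
  qed
  finally show ?thesis .
qed

lemma level_eqI:
  assumes f: "\<forall>s. 0 \<le> f s" and k: "k \<le> n"
    and cuts: "\<And>i. 0 < i \<Longrightarrow> i \<le> n \<Longrightarrow> H C (tau (real i / real n) f) = 1 \<longleftrightarrow> i \<le> k"
  shows "level C f = k"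
proof (rule le_antisym_by_lower_sets[OF _ level_le[OF f] k])
  fix i assume i: "i \<le> n"
  show "i \<le> level C f \<longleftrightarrow> i \<le> k"
  proof (cases "i = 0")
    case False
    then show ?thesis using H_cut_iff_le_level[OF f i] cuts[OF _ i] by simp
  qed simp
qed

text \<open>A pointwise grid map \<open>\<phi>\<close> with lower adjoint \<open>t\<close> turns cuts of \<open>g\<close> into cuts of \<open>f\<close>,
  so it commutes with \<open>level\<close>.\<close>
lemma level_grid_map:
  assumes f: "f \<in> lfun n"
    and phi: "\<And>j. j \<le> n \<Longrightarrow> phi j \<le> n"
    and g: "\<And>s j. j \<le> n \<Longrightarrow> f s = real j / real n \<Longrightarrow> g s = real (phi j) / real n"
    and t: "\<And>i. i \<le> n \<Longrightarrow> t i \<le> n"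
    and adjoint: "\<And>i j. i \<le> n \<Longrightarrow> j \<le> n \<Longrightarrow> i \<le> phi j \<longleftrightarrow> t i \<le> j"
  shows "level C g = phi (level C f)"
proof -
  have f_nonneg: "\<forall>s. 0 \<le> f s" using f by (rule lfun_nonneg)
  have g_nonneg: "\<forall>s. 0 \<le> g s"
    by (metis f g lfun_gridE of_nat_0_le_iff divide_nonneg_nonneg)
  have cut_g: "tau (real i / real n) g = tau (real (t i) / real n) f" if i: "i \<le> n" for i
  proof
    fix s
    obtain j where j: "j \<le> n" "f s = real j / real n" using f by (rule lfun_gridE)
    show "tau (real i / real n) g s = tau (real (t i) / real n) f s"
      using tau_grid[of g s "phi j" i, OF g[OF j]] tau_grid[of f s j "t i", OF j(2)]
        adjoint[OF i j(1)] by simp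
  qed
  show ?thesis
  proof (rule level_eqI[OF g_nonneg phi[OF level_le[OF f_nonneg]]])
    fix i assume "i \<le> n"
    then show "H C (tau (real i / real n) g) = 1 \<longleftrightarrow> i \<le> phi (level C f)"
      using cut_g H_cut_iff_le_level[OF f_nonneg t] adjoint level_le[OF f_nonneg] by simp
  qed
qed

lemma lift_in_luk: "f \<in> lfun n \<Longrightarrow> lift C f \<in> luk n"
  using lift_eq_level level_le lfun_nonneg grid_in_luk by metis

lemma lift_is_EF: "is_EF n lift"
  unfolding is_EF_def using lift_in_luk by blast

lemma lift_outcome_monotonic: "outcome_monotonic n lift"
  unfolding outcome_monotonic_def
proof (intro allI ballI impI)
  fix C and f g :: "'s \<Rightarrow> real"
  assume f: "f \<in> lfun n" and g: "g \<in> lfun n" and le: "\<forall>s. g s \<le> f s"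
  note f_nonneg = lfun_nonneg[OF f] and g_nonneg = lfun_nonneg[OF g]
  let ?k = "level C g"
  have "H C (tau (real ?k / real n) g) \<le> H C (tau (real ?k / real n) f)"
    using le by (intro H_mono tau_in_lfun_1 tau_mono) simp
  then have "H C (tau (real ?k / real n) f) = 1"
    using H_cut_at_level[OF g_nonneg] H_cut_eq_1_iff_ge_1 by simp
  then have "?k \<le> level C f"
    using H_cut_iff_le_level[OF f_nonneg level_le[OF g_nonneg]] by simp
  then show "lift C g \<le> lift C f"
    using lift_eq_level[OF f_nonneg] lift_eq_level[OF g_nonneg] grid_le_iff by simp
qed

lemma lift_N_maximal: "N_maximal n lift"
  unfolding N_maximal_def
proof
  fix f :: "'s \<Rightarrow> real" assume f: "f \<in> lfun n"
  note f_nonneg = lfun_nonneg[OF f]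
  let ?g = "\<lambda>s. 1 - f s"
  have g_nonneg: "\<forall>s. 0 \<le> ?g s" using lfun_le_1[OF f] by simp
  define k where "k = level UNIV f"
  show "1 - lift {} ?g \<le> lift UNIV f"
  proof (cases "k = n")
    case True
    then show ?thesis
      using lift_eq_level[OF f_nonneg] lift_eq_level[OF g_nonneg] n_pos k_def by simp
  next
    case False
    then have k: "k < n" using level_le[OF f_nonneg, of UNIV] k_def by simp
    let ?h = "tau (real (Suc k) / real n) f"
    have "H UNIV ?h \<noteq> 1" using H_cut_iff_le_level[OF f_nonneg, of "Suc k"] k k_def by simp
    then have "H {} (\<lambda>s. 1 - ?h s) = 1"
      using H_boolean[OF tau_in_lfun_1] H_N_maximal[OF tau_in_lfun_1] by metis
    moreover have "(\<lambda>s. 1 - ?h s) = tau (real (n - k) / real n) ?g"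
    proof
      fix s
      obtain j where j: "j \<le> n" "f s = real j / real n" using f by (rule lfun_gridE)
      then have "?g s = real (n - j) / real n" by (simp add: of_nat_diff field_simps)
      then show "1 - ?h s = tau (real (n - k) / real n) ?g s"
        using tau_grid[of f s j "Suc k", OF j(2)] tau_grid[of ?g s "n - j" "n - k"] j(1) k
        by auto
    qed
    ultimately have "n - k \<le> level {} ?g"
      using H_cut_iff_le_level[OF g_nonneg, of "n - k"] by simp
    then have "real (n - k) / real n \<le> lift {} ?g"
      using lift_eq_level[OF g_nonneg] grid_le_iff by simp
    moreover have "lift UNIV f = 1 - real (n - k) / real n"
      using lift_eq_level[OF f_nonneg] k_def k n_pos by (simp add: of_nat_diff field_simps)
    ultimately show ?thesis by linarith
  qed
qed

lemma lift_superadditive: "superadditive n lift"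
  unfolding superadditive_def
proof (intro allI ballI impI)
  fix C1 C2 :: "'p set" and f g :: "'s \<Rightarrow> real"
  assume f: "f \<in> lfun n" and g: "g \<in> lfun n" and disj: "C1 \<inter> C2 = {}"
  note f_nonneg = lfun_nonneg[OF f] and g_nonneg = lfun_nonneg[OF g]
  let ?m = "min (level C1 f) (level C2 g)" and ?h = "\<lambda>s. min (f s) (g s)"
  have h_nonneg: "\<forall>s. 0 \<le> ?h s" using f_nonneg g_nonneg by simp
  have m: "?m \<le> n" using level_le[OF f_nonneg, of C1] by simp
  let ?t = "real ?m / real n"
  have "H C1 (tau ?t f) = 1" "H C2 (tau ?t g) = 1"
    using H_cut_iff_le_level[OF f_nonneg m] H_cut_iff_le_level[OF g_nonneg m] by simp_all
  moreover have "min (H C1 (tau ?t f)) (H C2 (tau ?t g)) \<le> H (C1 \<union> C2) (tau ?t ?h)"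
    unfolding tau_min by (rule H_superadditive[OF disj tau_in_lfun_1 tau_in_lfun_1])
  ultimately have "H (C1 \<union> C2) (tau ?t ?h) \<ge> 1" by simp
  then have "?m \<le> level (C1 \<union> C2) ?h"
    using H_cut_iff_le_level[OF h_nonneg m] H_cut_eq_1_iff_ge_1 by simp
  then have "real ?m / real n \<le> lift (C1 \<union> C2) ?h"
    using lift_eq_level[OF h_nonneg] grid_le_iff by simp
  moreover have "min (lift C1 f) (lift C2 g) = real ?m / real n"
    using lift_eq_level[OF f_nonneg] lift_eq_level[OF g_nonneg] by (simp add: grid_le_iff min_def)
  ultimately show "min (lift C1 f) (lift C2 g) \<le> lift (C1 \<union> C2) ?h" by simp
qed

lemma loplus_grid:
  "a \<le> n \<Longrightarrow> loplus (real a / real n) (real a / real n) = real (min (2 * a) n) / real n"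
  using n_pos by (auto simp: loplus_def min_def field_simps)

lemma lodot_grid:
  "a \<le> n \<Longrightarrow> lodot (real a / real n) (real a / real n) = real (2 * a - n) / real n"
  using n_pos by (auto simp: lodot_def max_def field_simps of_nat_diff)

lemma lift_homogeneous: "homogeneous n lift"
  unfolding homogeneous_def
proof (intro allI ballI conjI)
  fix C and f :: "'s \<Rightarrow> real" assume f: "f \<in> lfun n"
  note f_nonneg = lfun_nonneg[OF f]
  let ?k = "level C f"
  have k: "?k \<le> n" using level_le[OF f_nonneg] .
  have "level C (\<lambda>s. loplus (f s) (f s)) = min (2 * ?k) n"
  proof (rule level_grid_map[OF f, where phi = "\<lambda>j. min (2 * j) n" and t = "\<lambda>i. (i + 1) div 2"])
    show "loplus (f s) (f s) = real (min (2 * j) n) / real n"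
      if "j \<le> n" "f s = real j / real n" for s j
      using that loplus_grid by simp
    show "(i + 1) div 2 \<le> n" if "i \<le> n" for i using that by linarith
    show "i \<le> min (2 * j) n \<longleftrightarrow> (i + 1) div 2 \<le> j" if "i \<le> n" for i j
      using that by (rule le_min_double_iff)
  qed simp
  moreover have "\<forall>s. 0 \<le> loplus (f s) (f s)" using f_nonneg by (simp add: loplus_def)
  ultimately show "lift C (\<lambda>s. loplus (f s) (f s)) = loplus (lift C f) (lift C f)"
    using lift_eq_level[OF f_nonneg] lift_eq_level loplus_grid[OF k] by simp
  have "level C (\<lambda>s. lodot (f s) (f s)) = 2 * ?k - n"
  proof (rule level_grid_map[OF f, where phi = "\<lambda>j. 2 * j - n"
        and t = "\<lambda>i. if i = 0 then 0 else (n + i + 1) div 2"])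
    show "lodot (f s) (f s) = real (2 * j - n) / real n"
      if "j \<le> n" "f s = real j / real n" for s j
      using that lodot_grid by simp
    show "(if i = 0 then 0 else (n + i + 1) div 2) \<le> n" if "i \<le> n" for i
      using that by simp linarith
    show "i \<le> 2 * j - n \<longleftrightarrow> (if i = 0 then 0 else (n + i + 1) div 2) \<le> j" for i j
      by (rule le_double_minus_iff)
  qed simp
  moreover have "\<forall>s. 0 \<le> lodot (f s) (f s)" by (simp add: lodot_def)
  ultimately show "lift C (\<lambda>s. lodot (f s) (f s)) = lodot (lift C f) (lift C f)"
    using lift_eq_level[OF f_nonneg] lift_eq_level lodot_grid[OF k] by simp
qed

lemma lift_liveness: "liveness lift"
  unfolding liveness_def
proof
  fix C
  let ?one = "(\<lambda>_. 1) :: 's \<Rightarrow> real"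
  have "tau (real n / real n) ?one = ?one" by (auto simp: tau_def)
  then have "H C (tau (real n / real n) ?one) = 1" using H_liveness by (simp only:)
  then have "n \<le> level C ?one" using H_cut_iff_le_level[of ?one n C] by simp
  then have "level C ?one = n" using level_le[of ?one] by (simp add: le_antisym)
  then show "lift C (\<lambda>_. 1) = 1" using lift_eq_level n_pos by simp
qed

lemma lift_safety: "safety lift"
  unfolding safety_def
proof
  fix C
  let ?zero = "(\<lambda>_. 0) :: 's \<Rightarrow> real"
  have "H C (tau (real i / real n) ?zero) = 0" if "0 < i" for i
  proof -
    have "0 < real i / real n" using that n_pos by (simp add: zero_less_divide_iff)
    then have "tau (real i / real n) ?zero = ?zero" by (auto simp: tau_def)
    then show ?thesis using H_safety by simp
  qed
  then have "level C ?zero = 0" by (intro level_eqI) auto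
  then show "lift C (\<lambda>_. 0) = 0" using lift_eq_level by simp
qed

lemma lift_playable: "playable n lift"
  unfolding playable_def
  using lift_is_EF lift_outcome_monotonic lift_N_maximal lift_superadditive lift_homogeneous
    lift_liveness lift_safety by blast

lemma lift_sharp: assumes f: "f \<in> lfun 1" shows "lift C f = H C f"
proof -
  have f01: "\<And>s. f s = 0 \<or> f s = 1" using f by (simp add: lfun_Suc_0_iff)
  then have f_nonneg: "\<forall>s. 0 \<le> f s" by (metis order_refl zero_le_one)
  have "tau (real i / real n) f = f" if "0 < i" "i \<le> n" for i
  proof
    fix s
    have "0 < real i / real n" "real i / real n \<le> 1"
      using that n_pos by (simp_all add: zero_less_divide_iff divide_le_eq_1)
    then show "tau (real i / real n) f s = f s" using f01[of s] by (auto simp: tau_def)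
  qed
  then have "level C f = (if H C f = 1 then n else 0)"
    by (intro level_eqI[OF f_nonneg]) simp_all
  then show ?thesis using lift_eq_level[OF f_nonneg] n_pos H_boolean[OF f, of C] by auto
qed

lemma lift_principal: assumes "principal 1 H" shows "principal n lift"
proof -
  obtain g :: "'s \<Rightarrow> real" where g: "g \<in> lfun 1"
    and gen: "{f \<in> lfun 1. H {} f = 1} = {f \<in> lfun 1. \<forall>s. lodot_pow (g s) 1 \<le> f s}"
    using assms unfolding principal_def by blast
  have g01: "\<And>s. g s = 0 \<or> g s = 1" using g by (simp add: lfun_Suc_0_iff)
  have g_pow: "lodot_pow (g s) k = g s" if "k \<ge> 1" for s k
    using lodot_pow_boolean[OF g01 that] .
  have "lift {} f = 1 \<longleftrightarrow> (\<forall>s. lodot_pow (g s) n \<le> f s)" if f: "f \<in> lfun n" for f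
  proof -
    note f_nonneg = lfun_nonneg[OF f]
    have "lift {} f = 1 \<longleftrightarrow> n \<le> level {} f"
      using lift_eq_level[OF f_nonneg] level_le[OF f_nonneg, of "{}"] by auto
    also have "\<dots> \<longleftrightarrow> H {} (tau 1 f) = 1"
      using H_cut_iff_le_level[OF f_nonneg order_refl] by simp
    also have "\<dots> \<longleftrightarrow> (\<forall>s. lodot_pow (g s) 1 \<le> tau 1 f s)"
      using gen tau_in_lfun_1[of 1 f] by blast
    also have "\<dots> \<longleftrightarrow> (\<forall>s. g s \<le> f s)"
      unfolding g_pow[OF order_refl] using g01 f_nonneg by (simp add: boolean_le_tau_1_iff)
    also have "\<dots> \<longleftrightarrow> (\<forall>s. lodot_pow (g s) n \<le> f s)"
      unfolding g_pow[OF n_pos] ..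
    finally show ?thesis .
  qed
  moreover have "g \<in> lfun n" using g lfun_1_subset n_pos by blast
  ultimately show ?thesis unfolding principal_def by blast
qed

end

theorem mainTheorem4:
  fixes H E :: "'p::finite set \<Rightarrow> ('s \<Rightarrow> real) \<Rightarrow> real"
    and n :: nat
  assumes N2: "card (UNIV :: 'p set) \<ge> 2"
    and S2: "\<exists>a b :: 's. a \<noteq> b"
    and n1: "n \<ge> 1"
    and H: "playable 1 H"
    and E_def: "\<forall>C f. E C f = Max {real i / real n | i. i \<le> n \<and> H C (tau (real i / real n) f) = 1}"
  shows "playable n E \<and> (\<forall>C. \<forall>f\<in>lfun 1. E C f = H C f)
         \<and> (truly_playable 1 H \<longrightarrow> truly_playable n E)"
proof -
  interpret threshold_extension H n using n1 H by unfold_locales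
  have "E = lift" by (intro ext) (simp add: E_def lift_def)
  moreover have "truly_playable n lift" if "truly_playable 1 H"
    using that lift_playable lift_principal by (simp add: truly_playable_def)
  ultimately show ?thesis using lift_playable lift_sharp by simp
qed

end
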